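(* Let $1\le k<N/2$ and $l\ge1$. Consider identifying an unknown $x\in\{0,1\}^N$ with $wt(x)=k$ using the balance oracle under the restriction that every query (in every superposition) places at most $l$ coins on the pans. Then every quantum algorithm that identifies $x$ with bounded error needs $\Omega\big(\sqrt{kN/(l\min(k,l))}\big)$ queries. In particular it needs $\Omega(\sqrt{N/l})$ queries.
   Context: Counterfeit coin model: $x\in\{0,1\}^N$, $x_i=1$ meaning coin $i$ is false; $k=wt(x)$ (Hamming weight) is known and $k<N/2$. Queries are strings $q\in\{0,1,-1\}^N$ with equally many entries $1$ and $-1$ ($1$: left pan, $-1$: right pan, $0$: not weighed); $\chi(x;q)=0$ if $\sum_iq_ix_i=0$ (balanced) and $1$ otherwise. The balance oracle is the unitary $|q\rangle\mapsto(-1)^{\chi(x;q)}|q\rangle$ (equivalently $|q,a\rangle\mapsto|q,a\oplus\chi(x;q)\rangle$). "At most $l$ coins on the pans" means only query strings with at most $l$ nonzero entries may be queried. Bounded error: output equals $x$ with probability at least a constant such as $2/3$ for every admissible $x$. *)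

theory Defs
  imports Complex_Main
begin

text \<open>Coins are indexed 0..N-1. A configuration x of false coins is the set of
  indices i with x_i = 1 (a subset of {..<N}); wt(x) = card x.\<close>

definition queries :: "nat \<Rightarrow> nat \<Rightarrow> (nat \<Rightarrow> int) set" where
  "queries N l = {q. (\<forall>i. q i \<in> {-1, 0, 1}) \<and> (\<forall>i\<ge>N. q i = 0)
      \<and> card {i. q i = 1} = card {i. q i = -1}
      \<and> card {i. q i \<noteq> 0} \<le> l}"

definition chi :: "nat \<Rightarrow> nat set \<Rightarrow> (nat \<Rightarrow> int) \<Rightarrow> nat" where
  "chi N x q = (if (\<Sum>i<N. q i * of_bool (i \<in> x)) = 0 then 0 else 1)"

text \<open>Basis states: pairs (query register, workspace register).
  Vectors are functions on the basis, only their values on the index set S matter.\<close>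
type_synonym idx = "(nat \<Rightarrow> int) \<times> nat"
type_synonym qvec = "idx \<Rightarrow> complex"
type_synonym qmat = "idx \<Rightarrow> idx \<Rightarrow> complex"

definition apply_mat :: "idx set \<Rightarrow> qmat \<Rightarrow> qvec \<Rightarrow> qvec" where
  "apply_mat S M v = (\<lambda>a. \<Sum>b\<in>S. M a b * v b)"

definition unitary_on :: "idx set \<Rightarrow> qmat \<Rightarrow> bool" where
  "unitary_on S M \<longleftrightarrow> (\<forall>a\<in>S. \<forall>b\<in>S. (\<Sum>c\<in>S. cnj (M c a) * M c b) = of_bool (a = b))"

definition balance_oracle :: "nat \<Rightarrow> nat set \<Rightarrow> qvec \<Rightarrow> qvec" where
  "balance_oracle N x v = (\<lambda>(q, w). (-1) ^ chi N x q * v (q, w))"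

fun run :: "idx set \<Rightarrow> nat \<Rightarrow> nat set \<Rightarrow> (nat \<Rightarrow> qmat) \<Rightarrow> qvec \<Rightarrow> nat \<Rightarrow> qvec" where
  "run S N x Us psi0 0 = apply_mat S (Us 0) psi0"
| "run S N x Us psi0 (Suc t) = apply_mat S (Us (Suc t)) (balance_oracle N x (run S N x Us psi0 t))"

definition success_prob ::
  "idx set \<Rightarrow> nat \<Rightarrow> nat set \<Rightarrow> (nat \<Rightarrow> qmat) \<Rightarrow> qvec \<Rightarrow> nat \<Rightarrow> (idx \<Rightarrow> nat set) \<Rightarrow> real" where
  "success_prob S N x Us psi0 T out =
     (\<Sum>a\<in>{a\<in>S. out a = x}. (cmod (run S N x Us psi0 T a))^2)"

definition bounded_error_alg ::
  "nat \<Rightarrow> nat \<Rightarrow> nat \<Rightarrow> nat set \<Rightarrow> nat \<Rightarrow> (nat \<Rightarrow> qmat) \<Rightarrow> qvec \<Rightarrow> (idx \<Rightarrow> nat set) \<Rightarrow> bool" where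
  "bounded_error_alg N k l W T Us psi0 out \<longleftrightarrow>
     finite W \<and>
     (\<forall>t\<le>T. unitary_on (queries N l \<times> W) (Us t)) \<and>
     (\<Sum>a\<in>queries N l \<times> W. (cmod (psi0 a))^2) = 1 \<and>
     (\<forall>x. x \<subseteq> {..<N} \<and> card x = k \<longrightarrow>
        success_prob (queries N l \<times> W) N x Us psi0 T out \<ge> 2/3)"

end

theory Submission
  imports Defs
begin

text \<open>A weighted adversary argument. Relate every admissible x to each x' obtained by moving one
  false coin a to a genuine position j, and track the progress measure
  \<open>\<Sum> |\<langle>\<psi>\<^sub>x\<^sup>t, \<psi>\<^sub>x'\<^sup>t\<rangle>|\<close> over all such pairs. It starts at the number of pairs and must drop below
  17/18 of it for the outputs to be distinguishable. One query can only decrease the term of a pair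
  through amplitude on query strings that weigh a or j; bounding this by weighted AM-GM, with weight
  \<beta> when a is on the pans and 1/\<beta> otherwise, every unit of squared amplitude is charged at most
  \<open>2\<beta> min(k,l) N + 2kl/\<beta>\<close>, because a query weighs at most min(k,l) false and at most l genuine coins.
  Choosing \<beta> = \<open>\<surd>(kl/(min(k,l) N))\<close> gives the bound.\<close>

definition inner_on :: "idx set \<Rightarrow> qvec \<Rightarrow> qvec \<Rightarrow> complex" where
  "inner_on S u v = (\<Sum>b\<in>S. cnj (u b) * v b)"

definition sqnorm_on :: "idx set \<Rightarrow> qvec \<Rightarrow> real" where
  "sqnorm_on S u = (\<Sum>b\<in>S. (cmod (u b))\<^sup>2)"

lemma inner_on_self: "inner_on S u u = of_real (sqnorm_on S u)"
  unfolding inner_on_def sqnorm_on_def of_real_sum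
  by (intro sum.cong refl) (simp add: complex_norm_square[symmetric] mult.commute)

lemma inner_on_apply_mat:
  assumes "finite S" "unitary_on S M"
  shows "inner_on S (apply_mat S M u) (apply_mat S M v) = inner_on S u v"
proof -
  have "inner_on S (apply_mat S M u) (apply_mat S M v)
      = (\<Sum>c\<in>S. \<Sum>b\<in>S. \<Sum>a\<in>S. cnj (u a) * v b * (cnj (M c a) * M c b))"
    unfolding inner_on_def apply_mat_def cnj_sum sum_distrib_right sum_distrib_left
    by (simp add: mult_ac)
  also have "\<dots> = (\<Sum>a\<in>S. \<Sum>b\<in>S. cnj (u a) * v b * (\<Sum>c\<in>S. cnj (M c a) * M c b))"
    unfolding sum_distrib_left by (subst sum.swap, subst (2) sum.swap, subst sum.swap) (rule refl)
  also have "\<dots> = (\<Sum>a\<in>S. \<Sum>b\<in>S. cnj (u a) * v b * of_bool (a = b))"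
    using assms(2) unfolding unitary_on_def by simp
  also have "\<dots> = inner_on S u v"
    unfolding inner_on_def using assms(1) by (simp add: of_bool_def if_distrib cong: if_cong)
  finally show ?thesis .
qed

lemma sqnorm_on_apply_mat:
  "finite S \<Longrightarrow> unitary_on S M \<Longrightarrow> sqnorm_on S (apply_mat S M u) = sqnorm_on S u"
  using inner_on_apply_mat[of S M u u] by (simp add: inner_on_self)

lemma sqnorm_on_balance_oracle: "sqnorm_on S (balance_oracle N x u) = sqnorm_on S u"
  unfolding sqnorm_on_def balance_oracle_def
  by (intro sum.cong) (auto simp: norm_mult norm_power split: prod.splits)

lemma sqnorm_on_run:
  assumes "finite S" "\<forall>t\<le>T. unitary_on S (Us t)" "sqnorm_on S psi0 = 1" "t \<le> T"
  shows "sqnorm_on S (run S N x Us psi0 t) = 1"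
  using assms(4)
  by (induction t) (use assms(1-3) in \<open>simp_all add: sqnorm_on_apply_mat sqnorm_on_balance_oracle\<close>)

lemma two_mult_le_weighted_squares:
  fixes a b w :: real
  assumes "0 < w"
  shows "2 * a * b \<le> w * a\<^sup>2 + b\<^sup>2 / w"
proof -
  have "0 \<le> (w * a - b)\<^sup>2" by simp
  hence "2 * a * b * w \<le> w * a\<^sup>2 * w + b\<^sup>2" by (simp add: power2_eq_square algebra_simps)
  thus ?thesis using assms by (simp add: field_simps)
qed

lemma sqrt_divide_le_of_le_mult_sqrt:
  fixes A B c :: real
  assumes "0 < A" "0 < B" "A \<le> c * sqrt (A * B)"
  shows "sqrt (A / B) \<le> c"
proof -
  have "sqrt (A / B) = A / sqrt (A * B)"
    using assms(1,2) by (simp add: real_sqrt_divide real_sqrt_mult field_simps)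
  thus ?thesis using assms by (simp add: divide_le_eq)
qed

lemma cmod_inner_on_le_of_disjoint_masses:
  assumes "finite S" "sqnorm_on S u = 1" "sqnorm_on S v = 1" "A \<subseteq> S" "B \<subseteq> S" "A \<inter> B = {}"
    and "(\<Sum>b\<in>A. (cmod (u b))\<^sup>2) \<ge> 2/3" "(\<Sum>b\<in>B. (cmod (v b))\<^sup>2) \<ge> 2/3"
  shows "cmod (inner_on S u v) \<le> 17/18"
proof -
  let ?U = "\<lambda>b. (cmod (u b))\<^sup>2" and ?V = "\<lambda>b. (cmod (v b))\<^sup>2"
  have amgm: "x * y \<le> 3/8 * x\<^sup>2 + 2/3 * y\<^sup>2" for x y :: real
    using two_mult_le_weighted_squares[of "3/4" x y] by (simp add: field_simps)
  have "cmod (inner_on S u v) \<le> (\<Sum>b\<in>S. cmod (u b) * cmod (v b))"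
    unfolding inner_on_def by (rule order_trans[OF norm_sum]) (simp add: norm_mult)
  also have "\<dots> = (\<Sum>b\<in>A. cmod (u b) * cmod (v b)) + (\<Sum>b\<in>S-A. cmod (u b) * cmod (v b))"
    using assms(1,4) by (simp add: sum.subset_diff)
  also have "\<dots> \<le> (\<Sum>b\<in>A. 3/8 * ?U b + 2/3 * ?V b) + (\<Sum>b\<in>S-A. 2/3 * ?U b + 3/8 * ?V b)"
    by (intro add_mono sum_mono) (metis amgm, metis amgm add.commute mult.commute)
  also have "\<dots> = 3/8 * sum ?U A + 2/3 * sum ?V A + 2/3 * sum ?U (S-A) + 3/8 * sum ?V (S-A)"
    by (simp add: sum.distrib sum_distrib_left)
  finally have bound: "cmod (inner_on S u v)
      \<le> 3/8 * sum ?U A + 2/3 * sum ?V A + 2/3 * sum ?U (S-A) + 3/8 * sum ?V (S-A)" .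
  have "sum ?U A + sum ?U (S-A) = 1" "sum ?V A + sum ?V (S-A) = 1"
    using assms(1-4) unfolding sqnorm_on_def by (simp_all add: sum.subset_diff)
  moreover have "sum ?V B \<le> sum ?V (S-A)"
    using assms(1,5,6) by (intro sum_mono2) auto
  ultimately show ?thesis using bound assms(7,8) by linarith
qed

lemma cmod_inner_on_balance_oracle_ge:
  "cmod (inner_on S u v)
     - (\<Sum>b\<in>S. of_bool (chi N x (fst b) \<noteq> chi N y (fst b)) * (2 * cmod (u b) * cmod (v b)))
   \<le> cmod (inner_on S (balance_oracle N x u) (balance_oracle N y v))"
proof -
  let ?O = "inner_on S (balance_oracle N x u) (balance_oracle N y v)"
  have pointwise: "cmod (cnj (balance_oracle N x u b) * balance_oracle N y v b - cnj (u b) * v b)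
      \<le> of_bool (chi N x (fst b) \<noteq> chi N y (fst b)) * (2 * cmod (u b) * cmod (v b))" for b
  proof -
    obtain q w where b: "b = (q, w)" by (cases b)
    have "chi N x q = 0 \<or> chi N x q = 1" "chi N y q = 0 \<or> chi N y q = 1"
      by (simp_all add: chi_def)
    thus ?thesis by (elim disjE) (simp_all add: b balance_oracle_def norm_mult)
  qed
  have "?O - inner_on S u v
      = (\<Sum>b\<in>S. cnj (balance_oracle N x u b) * balance_oracle N y v b - cnj (u b) * v b)"
    unfolding inner_on_def by (simp add: sum_subtractf)
  hence "cmod (?O - inner_on S u v)
      \<le> (\<Sum>b\<in>S. cmod (cnj (balance_oracle N x u b) * balance_oracle N y v b - cnj (u b) * v b))"
    by (simp only: norm_sum)
  also have "\<dots> \<le> (\<Sum>b\<in>S. of_bool (chi N x (fst b) \<noteq> chi N y (fst b)) * (2 * cmod (u b) * cmod (v b)))"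
    by (rule sum_mono[OF pointwise])
  finally have "cmod (?O - inner_on S u v) \<le> \<dots>" .
  moreover have "cmod (inner_on S u v) - cmod ?O \<le> cmod (?O - inner_on S u v)"
    by (metis norm_minus_commute norm_triangle_ineq2)
  ultimately show ?thesis by linarith
qed

definition swap_coin :: "nat set \<Rightarrow> nat \<Rightarrow> nat \<Rightarrow> nat set" where
  "swap_coin x a j = insert j (x - {a})"

lemma chi_swap_coin:
  assumes "q a = 0" "q j = 0"
  shows "chi N (swap_coin x a j) q = chi N x q"
proof -
  have "(\<Sum>i<N. q i * of_bool (i \<in> swap_coin x a j)) = (\<Sum>i<N. q i * of_bool (i \<in> x))"
    using assms by (intro sum.cong) (auto simp: swap_coin_def)
  thus ?thesis by (simp only: chi_def)
qed

lemma swap_coin_props: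
  assumes "x \<subseteq> {..<N}" "a \<in> x" "j < N" "j \<notin> x"
  shows "swap_coin x a j \<subseteq> {..<N}" "card (swap_coin x a j) = card x"
    "a \<notin> swap_coin x a j" "j \<in> swap_coin x a j" "swap_coin (swap_coin x a j) j a = x"
proof -
  have "finite x" using assms(1) finite_subset by blast
  hence "card x > 0" using assms(2) card_gt_0_iff by blast
  thus "card (swap_coin x a j) = card x"
    using assms \<open>finite x\<close> by (simp add: swap_coin_def card_Diff_singleton)
qed (use assms in \<open>auto simp: swap_coin_def\<close>)

definition touch_mass :: "idx set \<Rightarrow> qvec \<Rightarrow> nat \<Rightarrow> nat \<Rightarrow> ((nat \<Rightarrow> int) \<Rightarrow> real) \<Rightarrow> real" where
  "touch_mass S v a j g = (\<Sum>b\<in>S. of_bool (fst b a \<noteq> 0 \<or> fst b j \<noteq> 0) * g (fst b) * (cmod (v b))\<^sup>2)"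

lemma touch_mass_commute: "touch_mass S v a j g = touch_mass S v j a g"
  unfolding touch_mass_def by (simp add: disj_commute)

lemma touch_mass_add:
  "touch_mass S v a j g + touch_mass S v a j h = touch_mass S v a j (\<lambda>q. g q + h q)"
  unfolding touch_mass_def by (simp add: sum.distrib[symmetric] algebra_simps)

lemma cmod_inner_on_oracle_swap_decrease:
  assumes w: "\<And>q. 0 < w q"
  shows "cmod (inner_on S u v)
           - cmod (inner_on S (balance_oracle N x u) (balance_oracle N (swap_coin x a j) v))
         \<le> touch_mass S u a j w + touch_mass S v a j (\<lambda>q. 1 / w q)"
proof -
  have pointwise: "of_bool (chi N x q \<noteq> chi N (swap_coin x a j) q) * (2 * cmod (u b) * cmod (v b))
      \<le> of_bool (q a \<noteq> 0 \<or> q j \<noteq> 0) * (w q * (cmod (u b))\<^sup>2 + (cmod (v b))\<^sup>2 / w q)" for q b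
  proof (cases "q a = 0 \<and> q j = 0")
    case True thus ?thesis by (simp add: chi_swap_coin)
  next
    case False
    have "0 \<le> w q * (cmod (u b))\<^sup>2 + (cmod (v b))\<^sup>2 / w q"
      using w[of q] by (intro add_nonneg_nonneg) auto
    moreover have "2 * cmod (u b) * cmod (v b) \<le> w q * (cmod (u b))\<^sup>2 + (cmod (v b))\<^sup>2 / w q"
      by (rule two_mult_le_weighted_squares[OF w])
    ultimately show ?thesis using False by simp
  qed
  have "(\<Sum>b\<in>S. of_bool (chi N x (fst b) \<noteq> chi N (swap_coin x a j) (fst b)) * (2 * cmod (u b) * cmod (v b)))
      \<le> (\<Sum>b\<in>S. of_bool (fst b a \<noteq> 0 \<or> fst b j \<noteq> 0)
                 * (w (fst b) * (cmod (u b))\<^sup>2 + (cmod (v b))\<^sup>2 / w (fst b)))"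
    by (intro sum_mono pointwise)
  also have "\<dots> = touch_mass S u a j w + touch_mass S v a j (\<lambda>q. 1 / w q)"
    unfolding touch_mass_def sum.distrib[symmetric] by (intro sum.cong refl) (simp add: field_simps)
  finally show ?thesis using cmod_inner_on_balance_oracle_ge[of S u v N x "swap_coin x a j"] by linarith
qed

lemma sum_touch_mass_le:
  assumes "\<And>b. b \<in> S \<Longrightarrow> (\<Sum>(a, j)\<in>P. of_bool (fst b a \<noteq> 0 \<or> fst b j \<noteq> 0) * g a j (fst b)) \<le> V"
  shows "(\<Sum>(a, j)\<in>P. touch_mass S v a j (g a j)) \<le> V * sqnorm_on S v"
proof -
  have "(\<Sum>(a, j)\<in>P. touch_mass S v a j (g a j))
      = (\<Sum>b\<in>S. (cmod (v b))\<^sup>2 * (\<Sum>(a, j)\<in>P. of_bool (fst b a \<noteq> 0 \<or> fst b j \<noteq> 0) * g a j (fst b)))"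
    unfolding touch_mass_def sum_distrib_left case_prod_beta
    by (subst sum.swap) (simp add: mult_ac)
  also have "\<dots> \<le> (\<Sum>b\<in>S. (cmod (v b))\<^sup>2 * V)"
    by (intro sum_mono mult_left_mono assms) simp_all
  finally show ?thesis by (simp add: sqnorm_on_def sum_distrib_left mult.commute)
qed

definition pan_weight :: "real \<Rightarrow> int \<Rightarrow> real" where
  "pan_weight \<beta> c = (if c \<noteq> 0 then \<beta> else 1 / \<beta>)"

lemma pan_weight_pos: "0 < \<beta> \<Longrightarrow> 0 < pan_weight \<beta> c"
  by (simp add: pan_weight_def)

lemma touch_pan_weight_le:
  assumes "0 < \<beta>"
  shows "of_bool (q a \<noteq> 0 \<or> q j \<noteq> 0) * (pan_weight \<beta> (q a) + 1 / pan_weight \<beta> (q j))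
    \<le> 2 * \<beta> * of_bool (q a \<noteq> 0) + 2 / \<beta> * of_bool (q j \<noteq> 0)"
proof -
  have "1 / \<beta> \<le> 2 / \<beta>" using assms by (simp add: divide_right_mono)
  thus ?thesis using assms by (auto simp: pan_weight_def)
qed

text \<open>A query weighs at most min(|x|, l) coins of x and at most l coins outside x.\<close>
lemma sum_touch_pan_weight_le:
  fixes \<beta> :: real
  assumes q: "q \<in> queries N l" and x: "x \<subseteq> {..<N}" and \<beta>: "0 < \<beta>"
  shows "(\<Sum>(a, j)\<in>x \<times> ({..<N} - x).
            of_bool (q a \<noteq> 0 \<or> q j \<noteq> 0) * (pan_weight \<beta> (q a) + 1 / pan_weight \<beta> (q j)))
     \<le> 2 * \<beta> * real (min (card x) l) * real N + 2 * real (card x) * real l / \<beta>"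
proof -
  let ?C = "{..<N} - x" and ?Q = "{i. q i \<noteq> 0}"
  have fx: "finite x" using x finite_subset by blast
  have "?Q \<subseteq> {..<N}" and card_Q: "card ?Q \<le> l"
    using q unfolding queries_def by (auto simp: not_less[symmetric])
  hence fQ: "finite ?Q" using finite_subset by blast
  have "card (x \<inter> ?Q) \<le> card x" "card (x \<inter> ?Q) \<le> card ?Q"
    by (intro card_mono fx fQ; auto)+
  hence card_x: "card (x \<inter> ?Q) \<le> min (card x) l" using card_Q by simp
  have "card (?C \<inter> ?Q) \<le> card ?Q" by (intro card_mono fQ) auto
  hence card_C: "card (?C \<inter> ?Q) \<le> l" using card_Q by simp
  have "card ?C \<le> N" using card_mono[of "{..<N}" ?C] by auto
  have "(\<Sum>(a, j)\<in>x \<times> ?C.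
            of_bool (q a \<noteq> 0 \<or> q j \<noteq> 0) * (pan_weight \<beta> (q a) + 1 / pan_weight \<beta> (q j)))
      \<le> (\<Sum>(a, j)\<in>x \<times> ?C. 2 * \<beta> * of_bool (q a \<noteq> 0) + 2 / \<beta> * of_bool (q j \<noteq> 0))"
    using touch_pan_weight_le[of \<beta> q] \<beta> by (intro sum_mono) auto
  also have "\<dots> = 2 * \<beta> * card ?C * card (x \<inter> ?Q) + 2 / \<beta> * card x * card (?C \<inter> ?Q)"
    by (simp add: sum.cartesian_product[symmetric] sum.distrib sum_distrib_left[symmetric]
        sum_divide_distrib[symmetric] fx)
  also have "\<dots> \<le> 2 * \<beta> * N * min (card x) l + 2 / \<beta> * card x * l"
    using \<beta> card_x card_C \<open>card ?C \<le> N\<close> by (intro add_mono mult_mono mult_left_mono) auto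
  finally show ?thesis by (simp add: mult_ac)
qed

definition configurations :: "nat \<Rightarrow> nat \<Rightarrow> nat set set" where
  "configurations N k = {x. x \<subseteq> {..<N} \<and> card x = k}"

definition swap_pairs :: "nat \<Rightarrow> nat \<Rightarrow> (nat set \<times> nat \<times> nat) set" where
  "swap_pairs N k = Sigma (configurations N k) (\<lambda>x. x \<times> ({..<N} - x))"

lemma finite_configurations: "finite (configurations N k)"
  unfolding configurations_def by (rule finite_subset[of _ "Pow {..<N}"]) auto

lemma configurations_nonempty: "k \<le> N \<Longrightarrow> configurations N k \<noteq> {}"
  unfolding configurations_def by (auto intro!: exI[of _ "{..<k}"])

lemma card_swap_pairs: "card (swap_pairs N k) = card (configurations N k) * (k * (N - k))"
proof -
  have "card (x \<times> ({..<N} - x)) = k * (N - k)" if "x \<in> configurations N k" for x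
    using that finite_subset[of x "{..<N}"]
    by (auto simp: configurations_def card_cartesian_product card_Diff_subset)
  thus ?thesis
    unfolding swap_pairs_def using finite_configurations
    by (subst card_SigmaI) (auto simp: configurations_def intro: finite_subset)
qed

lemma swap_pairs_swap_coin:
  assumes "(x, a, j) \<in> swap_pairs N k"
  shows "(swap_coin x a j, j, a) \<in> swap_pairs N k" "swap_coin (swap_coin x a j) j a = x"
  using assms swap_coin_props[of x N a j] by (auto simp: swap_pairs_def configurations_def)

lemma sum_swap_pairs_swap_coin:
  "(\<Sum>(x, a, j)\<in>swap_pairs N k. f (swap_coin x a j) j a) = (\<Sum>(x, a, j)\<in>swap_pairs N k. f x a j)"
  by (rule sum.reindex_bij_witness[where i="\<lambda>(x, a, j). (swap_coin x a j, j, a)"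
                                      and j="\<lambda>(x, a, j). (swap_coin x a j, j, a)"])
     (auto dest: swap_pairs_swap_coin)

locale bounded_error_query_algorithm =
  fixes N k l :: nat and W :: "nat set" and T :: nat
    and Us :: "nat \<Rightarrow> qmat" and psi0 :: qvec and out :: "idx \<Rightarrow> nat set"
  assumes algorithm: "bounded_error_alg N k l W T Us psi0 out"
begin

abbreviation basis :: "idx set" where
  "basis \<equiv> queries N l \<times> W"

abbreviation state :: "nat set \<Rightarrow> nat \<Rightarrow> qvec" where
  "state x t \<equiv> run basis N x Us psi0 t"

definition progress :: "nat \<Rightarrow> real" where
  "progress t = (\<Sum>(x, a, j)\<in>swap_pairs N k.
                   cmod (inner_on basis (state x t) (state (swap_coin x a j) t)))"

lemma unitary_Us: "t \<le> T \<Longrightarrow> unitary_on basis (Us t)"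
  using algorithm unfolding bounded_error_alg_def by blast

lemma sqnorm_psi0: "sqnorm_on basis psi0 = 1"
  using algorithm unfolding bounded_error_alg_def sqnorm_on_def by blast

lemma finite_basis: "finite basis"
  using sqnorm_psi0 unfolding sqnorm_on_def by (rule contrapos_pp) simp

lemma sqnorm_state: "t \<le> T \<Longrightarrow> sqnorm_on basis (state x t) = 1"
  by (rule sqnorm_on_run[OF finite_basis _ sqnorm_psi0]) (auto intro: unitary_Us)

lemma progress_initial: "progress 0 = card (swap_pairs N k)"
  unfolding progress_def
  by (simp add: inner_on_self sqnorm_on_apply_mat finite_basis unitary_Us sqnorm_psi0 case_prod_beta)

lemma progress_final: "progress T \<le> 17/18 * card (swap_pairs N k)"
proof -
  have "cmod (inner_on basis (state x T) (state (swap_coin x a j) T)) \<le> 17/18"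
    if "(x, a, j) \<in> swap_pairs N k" for x a j
  proof (rule cmod_inner_on_le_of_disjoint_masses
      [OF finite_basis sqnorm_state sqnorm_state, where A = "{b\<in>basis. out b = x}"
        and B = "{b\<in>basis. out b = swap_coin x a j}"])
    have x: "x \<subseteq> {..<N}" "card x = k" "a \<in> x" "j < N" "j \<notin> x"
      using that by (auto simp: swap_pairs_def configurations_def)
    note swapped = swap_coin_props[OF x(1,3-5)]
    have "success_prob basis N y Us psi0 T out \<ge> 2/3" if "y \<subseteq> {..<N}" "card y = k" for y
      using algorithm that unfolding bounded_error_alg_def by blast
    from this[OF x(1,2)] this[OF swapped(1)] swapped(2) x(2)
    show "(\<Sum>b\<in>{b\<in>basis. out b = x}. (cmod (state x T b))\<^sup>2) \<ge> 2/3"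
      and "(\<Sum>b\<in>{b\<in>basis. out b = swap_coin x a j}. (cmod (state (swap_coin x a j) T b))\<^sup>2) \<ge> 2/3"
      by (simp_all add: success_prob_def)
    show "{b\<in>basis. out b = x} \<inter> {b\<in>basis. out b = swap_coin x a j} = {}"
      using swapped(3) x(3) by auto
  qed auto
  hence "progress T \<le> (\<Sum>(x, a, j)\<in>swap_pairs N k. 17/18)"
    unfolding progress_def by (intro sum_mono) auto
  thus ?thesis by simp
qed

lemma progress_step:
  fixes \<beta> :: real
  assumes \<beta>: "0 < \<beta>" and t: "t < T"
  shows "progress t - progress (Suc t)
    \<le> card (configurations N k) * (2 * \<beta> * real (min k l) * real N + 2 * real k * real l / \<beta>)"
proof -
  define G where "G x a j = touch_mass basis (state x t) a j (\<lambda>q. pan_weight \<beta> (q a))" for x a j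
  define H where "H x a j = touch_mass basis (state x t) a j (\<lambda>q. 1 / pan_weight \<beta> (q j))" for x a j
  \<comment> \<open>The charge on the partner \<open>swap_coin x a j\<close> is booked to the reversed pair.\<close>
  have decrease: "cmod (inner_on basis (state x t) (state (swap_coin x a j) t))
      - cmod (inner_on basis (state x (Suc t)) (state (swap_coin x a j) (Suc t)))
    \<le> G x a j + H (swap_coin x a j) j a" for x a j
  proof -
    have "inner_on basis (state x (Suc t)) (state y (Suc t))
        = inner_on basis (balance_oracle N x (state x t)) (balance_oracle N y (state y t))" for y
      using inner_on_apply_mat[OF finite_basis unitary_Us] t by simp
    thus ?thesis
      using cmod_inner_on_oracle_swap_decrease[of "\<lambda>q. pan_weight \<beta> (q a)"] pan_weight_pos[OF \<beta>]
      unfolding G_def H_def by (simp add: touch_mass_commute[of _ _ j])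
  qed
  have "progress t - progress (Suc t) \<le> (\<Sum>(x, a, j)\<in>swap_pairs N k. G x a j + H (swap_coin x a j) j a)"
    unfolding progress_def sum_subtractf[symmetric]
    by (intro sum_mono) (auto simp del: run.simps intro: decrease)
  also have "\<dots> = (\<Sum>(x, a, j)\<in>swap_pairs N k. G x a j + H x a j)"
    using sum_swap_pairs_swap_coin[of H N k] by (simp add: sum.distrib case_prod_beta)
  also have "\<dots> = (\<Sum>x\<in>configurations N k. \<Sum>(a, j)\<in>x \<times> ({..<N} - x).
      touch_mass basis (state x t) a j (\<lambda>q. pan_weight \<beta> (q a) + 1 / pan_weight \<beta> (q j)))"
    unfolding G_def H_def touch_mass_add swap_pairs_def
    by (subst sum.Sigma) (auto simp: finite_configurations configurations_def intro: finite_subset)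
  also have "\<dots> \<le> (\<Sum>x\<in>configurations N k. 2 * \<beta> * real (min k l) * real N + 2 * real k * real l / \<beta>)"
  proof (intro sum_mono)
    fix x assume "x \<in> configurations N k"
    hence x: "x \<subseteq> {..<N}" "card x = k" by (auto simp: configurations_def)
    have "(\<Sum>(a, j)\<in>x \<times> ({..<N} - x).
        touch_mass basis (state x t) a j (\<lambda>q. pan_weight \<beta> (q a) + 1 / pan_weight \<beta> (q j)))
      \<le> (2 * \<beta> * real (min k l) * real N + 2 * real k * real l / \<beta>) * sqnorm_on basis (state x t)"
      by (rule sum_touch_mass_le) (use sum_touch_pan_weight_le[OF _ x(1) \<beta>] x(2) in auto)
    thus "(\<Sum>(a, j)\<in>x \<times> ({..<N} - x).
        touch_mass basis (state x t) a j (\<lambda>q. pan_weight \<beta> (q a) + 1 / pan_weight \<beta> (q j)))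
      \<le> 2 * \<beta> * real (min k l) * real N + 2 * real k * real l / \<beta>"
      using sqnorm_state t by simp
  qed
  finally show ?thesis by simp
qed

lemma weighted_query_bound:
  fixes \<beta> :: real
  assumes "k \<le> N" "0 < \<beta>"
  shows "real k * real (N - k)
    \<le> 18 * real T * (2 * \<beta> * real (min k l) * real N + 2 * real k * real l / \<beta>)"
proof -
  define V where "V = 2 * \<beta> * real (min k l) * real N + 2 * real k * real l / \<beta>"
  define X where "X = real (card (configurations N k))"
  have "X * (real k * real (N - k)) / 18 \<le> progress 0 - progress T"
    using progress_initial progress_final by (simp add: card_swap_pairs X_def mult_ac)
  also have "\<dots> = (\<Sum>t<T. progress t - progress (Suc t))"
    by (rule sum_lessThan_telescope'[symmetric])
  also have "\<dots> \<le> real T * (X * V)"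
    using sum_bounded_above[of "{..<T}" "\<lambda>t. progress t - progress (Suc t)" "X * V"]
      progress_step[OF assms(2)] by (simp add: X_def V_def)
  finally have "X * (real k * real (N - k)) \<le> X * (18 * real T * V)" by (simp add: algebra_simps)
  moreover have "0 < X"
    using configurations_nonempty[OF assms(1)] finite_configurations
    by (simp add: X_def card_gt_0_iff)
  ultimately show ?thesis by (simp add: V_def)
qed

lemma query_bound:
  assumes k: "1 \<le> k" "2 * k < N" and l: "1 \<le> l"
  shows "real k * real N \<le> 144 * real T * sqrt (real k * real N * (real l * real (min k l)))"
proof -
  define s where "s = sqrt (real k * real N * (real l * real (min k l)))"
  have pos: "0 < real k" "0 < real N" "0 < real l" "0 < real (min k l)" using k l by auto
  hence "0 < s" "s * s = real k * real N * (real l * real (min k l))"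
    by (simp_all add: s_def del: real_sqrt_mult)
  \<comment> \<open>With \<open>\<beta> = s / (min k l * N)\<close> both charges equal 2s.\<close>
  hence "2 * (s / (real (min k l) * real N)) * real (min k l) * real N
        + 2 * real k * real l / (s / (real (min k l) * real N)) = 4 * s"
    using pos by (simp add: field_simps)
  with weighted_query_bound[of "s / (real (min k l) * real N)"] k pos \<open>0 < s\<close>
  have "real k * real (N - k) \<le> 72 * real T * s" by simp
  moreover have "real N / 2 \<le> real (N - k)" using k by (simp add: of_nat_diff)
  hence "real k * (real N / 2) \<le> real k * real (N - k)" using pos by (intro mult_left_mono) auto
  ultimately show ?thesis unfolding s_def by linarith
qed

end

theorem theorem5:
  shows "\<exists>c>0. \<forall>N k l W T Us psi0 out.
     1 \<le> k \<longrightarrow> 2 * k < N \<longrightarrow> 1 \<le> l \<longrightarrow>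
     bounded_error_alg N k l W T Us psi0 out \<longrightarrow>
       real T \<ge> c * sqrt (real k * real N / (real l * real (min k l)))
     \<and> real T \<ge> c * sqrt (real N / real l)"
proof (intro exI[of _ "1/144"] conjI allI impI)
  fix N k l W T Us psi0 out
  assume k: "1 \<le> k" "2 * k < N" and l: "1 \<le> l" and "bounded_error_alg N k l W T Us psi0 out"
  then interpret bounded_error_query_algorithm N k l W T Us psi0 out
    by unfold_locales
  have "sqrt (real k * real N / (real l * real (min k l))) \<le> 144 * real T"
    using k l query_bound[OF k l] by (intro sqrt_divide_le_of_le_mult_sqrt) auto
  thus bound: "1/144 * sqrt (real k * real N / (real l * real (min k l))) \<le> real T" by simp
  have "real N / real l \<le> real k * real N / (real l * real (min k l))"
    using k l by (simp add: field_simps)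
  hence "sqrt (real N / real l) \<le> sqrt (real k * real N / (real l * real (min k l)))"
    by (rule real_sqrt_le_mono)
  with bound show "1/144 * sqrt (real N / real l) \<le> real T" by linarith
qed simp

end
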